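(* For all $x,y\in\mathbb{C}$ and all integers $n\ge 0$, \[ \sum_{k=0}^n(-1)^k x^{n-k}\big(L_{k+1}(y)+(xy-2)F_k(y)\big)=(-1)^n y\,F_{n+1}(y) \] and \[ \sum_{k=0}^n(-1)^k x^{n-k}\big((y^2+4)F_{k+1}(y)+(xy-2)L_k(y)\big)=(-1)^n y\,L_{n+1}(y)+2y\,x^{n+1}. \]
   Context: The Fibonacci polynomials $F_n(y)$ and Lucas polynomials $L_n(y)$ are defined by $F_0(y)=0$, $F_1(y)=1$, $L_0(y)=2$, $L_1(y)=y$ and $W_n(y)=yW_{n-1}(y)+W_{n-2}(y)$ for $n\ge2$ (for $W=F$ and $W=L$). *)

theory Defs
  imports Complex_Main
begin

fun fibpoly :: "nat \<Rightarrow> complex \<Rightarrow> complex" where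
  "fibpoly 0 y = 0"
| "fibpoly (Suc 0) y = 1"
| "fibpoly (Suc (Suc n)) y = y * fibpoly (Suc n) y + fibpoly n y"

fun lucpoly :: "nat \<Rightarrow> complex \<Rightarrow> complex" where
  "lucpoly 0 y = 2"
| "lucpoly (Suc 0) y = y"
| "lucpoly (Suc (Suc n)) y = y * lucpoly (Suc n) y + lucpoly n y"

end

theory Submission
  imports Defs
begin

text \<open>Both sums are alternating telescoping sums: with \<open>a k = y F\<^sub>k(y)\<close>, resp. \<open>a k = y L\<^sub>k(y)\<close>,
  the summands equal \<open>a (k+1) + x a k\<close>, because \<open>L\<^sub>n = 2 F\<^sub>n\<^sub>+\<^sub>1 - y F\<^sub>n\<close> turns
  \<open>L\<^sub>k\<^sub>+\<^sub>1 - 2 F\<^sub>k\<close> into \<open>y F\<^sub>k\<^sub>+\<^sub>1\<close> and \<open>(y\<^sup>2 + 4) F\<^sub>k\<^sub>+\<^sub>1 - 2 L\<^sub>k\<close> into \<open>y L\<^sub>k\<^sub>+\<^sub>1\<close>.\<close>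

lemma sum_alternating_telescope:
  fixes x :: "'a::comm_ring_1"
  shows "(\<Sum>k=0..n. (-1)^k * x^(n-k) * (a (Suc k) + x * a k))
       = (-1)^n * a (Suc n) + x^(Suc n) * a 0"
proof (induction n)
  case 0
  show ?case by simp
next
  case (Suc n)
  have "(\<Sum>k=0..n. (-1)^k * x^(Suc n-k) * (a (Suc k) + x * a k))
      = x * (\<Sum>k=0..n. (-1)^k * x^(n-k) * (a (Suc k) + x * a k))"
    unfolding sum_distrib_left by (rule sum.cong) (auto simp: Suc_diff_le)
  then show ?case
    by (simp add: Suc.IH) (simp add: algebra_simps)
qed

lemma lucpoly_eq_fibpoly: "lucpoly n y = 2 * fibpoly (Suc n) y - y * fibpoly n y"
  by (induction n y rule: lucpoly.induct) (simp_all add: algebra_simps)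

lemma lucpoly_Suc_minus_fibpoly: "lucpoly (Suc n) y - 2 * fibpoly n y = y * fibpoly (Suc n) y"
  by (simp add: lucpoly_eq_fibpoly algebra_simps)

lemma fibpoly_Suc_minus_lucpoly:
  "(y^2 + 4) * fibpoly (Suc n) y - 2 * lucpoly n y = y * lucpoly (Suc n) y"
  by (simp add: lucpoly_eq_fibpoly power2_eq_square algebra_simps)

theorem proposition3:
  fixes x y :: complex and n :: nat
  shows "((\<Sum>k=0..n. (-1)^k * x^(n-k) * (lucpoly (k+1) y + (x*y - 2) * fibpoly k y))
           = (-1)^n * y * fibpoly (n+1) y)
      \<and> ((\<Sum>k=0..n. (-1)^k * x^(n-k) * ((y^2 + 4) * fibpoly (k+1) y + (x*y - 2) * lucpoly k y))
           = (-1)^n * y * lucpoly (n+1) y + 2 * y * x^(n+1))"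
proof
  have "lucpoly (k+1) y + (x*y - 2) * fibpoly k y
      = y * fibpoly (Suc k) y + x * (y * fibpoly k y)" for k
    using lucpoly_Suc_minus_fibpoly[of k y] by (simp add: algebra_simps)
  then show "(\<Sum>k=0..n. (-1)^k * x^(n-k) * (lucpoly (k+1) y + (x*y - 2) * fibpoly k y))
           = (-1)^n * y * fibpoly (n+1) y"
    using sum_alternating_telescope[of x n "\<lambda>k. y * fibpoly k y"] by simp
next
  have "(y^2 + 4) * fibpoly (k+1) y + (x*y - 2) * lucpoly k y
      = y * lucpoly (Suc k) y + x * (y * lucpoly k y)" for k
    using fibpoly_Suc_minus_lucpoly[of y k] by (simp add: algebra_simps)
  then show "(\<Sum>k=0..n. (-1)^k * x^(n-k) * ((y^2 + 4) * fibpoly (k+1) y + (x*y - 2) * lucpoly k y))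
           = (-1)^n * y * lucpoly (n+1) y + 2 * y * x^(n+1)"
    using sum_alternating_telescope[of x n "\<lambda>k. y * lucpoly k y"] by (simp add: mult.commute)
qed

end
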